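(* Let $\delta:\mathbb{R}_+\to\mathbb{R}_+\cup\{+\infty\}$ satisfy $\delta(t)>0$ for $t>0$ and $t\mapsto\delta(t)/t$ non-decreasing, and let $M_\delta=\int_0^\infty e^{-\delta(t)}dt$. Let $\sigma$ be a probability measure on $\mathbb{R}$ with density $e^{-g}$, where $g:\mathbb{R}\to\mathbb{R}\cup\{+\infty\}$ is convex, attains its minimum at $0$, and satisfies $g(x)-g(0)\ge\delta(|x|)$ for all $x\in\mathbb{R}$. Then for every Borel $A\subset\mathbb{R}$, $$\sigma^+(A)\ \ge\ C_\delta\,\widetilde{\sigma(A)}\,\gamma\Big(\log\frac{1}{\widetilde{\sigma(A)}}\Big),\qquad C_\delta=\frac{e-1}{2e\max(\delta(M_\delta),1)},\quad \gamma(t)=\frac{t}{\delta^{-1}(t)}.$$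
   Context: $\sigma^+(A)=\liminf_{\varepsilon\to0^+}\frac{\sigma(A_\varepsilon)-\sigma(A)}{\varepsilon}$ with $A_\varepsilon=\{x:\exists y\in A,|x-y|<\varepsilon\}$; $\widetilde{\sigma(A)}=\min(\sigma(A),1-\sigma(A))$; $\delta^{-1}(s)=\sup\{t\ge0:\delta(t)\le s\}$. *)

theory Defs
  imports "HOL-Probability.Probability"
begin

text \<open>Extended-real-valued convex function (values in real \<union> {+\<infinity>}); convention 0 * \<infinity> = 0.\<close>
definition ereal_convex :: "(real \<Rightarrow> ereal) \<Rightarrow> bool" where
  "ereal_convex g \<longleftrightarrow> (\<forall>x y t. 0 \<le> t \<and> t \<le> 1 \<longrightarrow>
      g ((1 - t) * x + t * y) \<le> ereal (1 - t) * g x + ereal t * g y)"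

definition exp_neg :: "ereal \<Rightarrow> real" where
  "exp_neg v = (if v = \<infinity> then 0 else exp (- real_of_ereal v))"

definition nbhd :: "real set \<Rightarrow> real \<Rightarrow> real set" where
  "nbhd A \<epsilon> = {x. \<exists>y\<in>A. \<bar>x - y\<bar> < \<epsilon>}"

definition boundary_measure :: "real measure \<Rightarrow> real set \<Rightarrow> ereal" where
  "boundary_measure \<sigma> A =
     Liminf (at_right 0) (\<lambda>\<epsilon>. ereal ((measure \<sigma> (nbhd A \<epsilon>) - measure \<sigma> A) / \<epsilon>))"

definition M_delta :: "(real \<Rightarrow> ereal) \<Rightarrow> real" where
  "M_delta \<delta> = (LBINT t:{0..}. exp_neg (\<delta> t))"

definition delta_inv :: "(real \<Rightarrow> ereal) \<Rightarrow> real \<Rightarrow> ereal" where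
  "delta_inv \<delta> s = Sup {ereal t | t. t \<ge> 0 \<and> \<delta> t \<le> ereal s}"

definition gamma_fun :: "(real \<Rightarrow> ereal) \<Rightarrow> real \<Rightarrow> ereal" where
  "gamma_fun \<delta> t = ereal t / delta_inv \<delta> t"

definition C_delta :: "(real \<Rightarrow> ereal) \<Rightarrow> ereal" where
  "C_delta \<delta> = ereal ((exp 1 - 1) / (2 * exp 1)) / max (\<delta> (M_delta \<delta>)) 1"

end

theory Submission
  imports Defs
begin

text \<open>
  Let p = min (\<sigma> A) (1 - \<sigma> A) and L = ln (1/p). If an interval K has \<sigma> K > 1 - p and the
  density is at least m on K, then for small \<epsilon> either K lies in A_\<epsilon>, or A_\<epsilon> - A contains a gap
  of length \<epsilon> inside K; either way \<sigma> A_\<epsilon> - \<sigma> A \<ge> m \<epsilon>, hence \<sigma>^+ A \<ge> m.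
  As g is convex, the density exp (-g) is quasi-concave, so it suffices to find on each side of 0
  a point a whose tail has mass q < p/2 and where the density is large. At the point where the
  tail mass equals q, convexity of g dominates the tail by an exponential distribution:
  q \<le> exp (- g a) a / (g a - g 0). Together with g a - g 0 \<ge> \<delta> a, the monotonicity of \<delta> t / t
  beyond \<delta>^-1 L and the normalisation 1 \<le> 2 exp (- g 0) M_\<delta>, this gives
  exp (- g a) \<ge> 2 C_\<delta> q L / \<delta>^-1 L; letting q tend to p/2 yields the bound.
\<close>

section \<open>Neighbourhoods and boundary measure\<close>

lemma open_nbhd: "open (nbhd A \<epsilon>)"
proof -
  have "nbhd A \<epsilon> = (\<Union>y\<in>A. ball y \<epsilon>)"
    unfolding nbhd_def ball_def dist_real_def by (auto simp: abs_minus_commute)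
  then show ?thesis by auto
qed

lemma nbhd_borel [measurable]: "nbhd A \<epsilon> \<in> sets borel"
  using open_nbhd by auto

lemma subset_nbhd: "0 < \<epsilon> \<Longrightarrow> A \<subseteq> nbhd A \<epsilon>"
  unfolding nbhd_def by force

lemma uminus_mem_nbhd_uminus: "- x \<in> nbhd (uminus ` A) \<epsilon> \<longleftrightarrow> x \<in> nbhd A \<epsilon>"
  unfolding nbhd_def by (auto simp: abs_minus_commute)

lemma nbhd_gap_right:
  fixes A :: "real set"
  assumes x: "x \<notin> nbhd A \<epsilon>" and y: "y \<in> A" "x \<le> y"
  shows "\<exists>c. {c<..<c + \<epsilon>} \<subseteq> {x..y} \<inter> (nbhd A \<epsilon> - A)"
proof -
  define S where "S = A \<inter> {x..y}"
  have yS: "y \<in> S" using y S_def by auto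
  have bdd: "bdd_below S" unfolding S_def by (rule bdd_belowI[of _ x]) auto
  have far: "x + \<epsilon> \<le> a" if "a \<in> S" for a
    using x that unfolding S_def nbhd_def by force
  define z where "z = Inf S"
  have zy: "z \<le> y" using cInf_lower[OF yS bdd] z_def by simp
  have zx: "x + \<epsilon> \<le> z" unfolding z_def using yS by (intro cInf_greatest) (auto intro: far)
  show ?thesis
  proof (rule exI[of _ "z - \<epsilon>"], intro subsetI)
    fix w assume w: "w \<in> {z - \<epsilon><..<z - \<epsilon> + \<epsilon>}"
    have wxy: "w \<in> {x..y}" using w zx zy by auto
    moreover have "w \<notin> A"
    proof
      assume "w \<in> A"
      then have "z \<le> w" using wxy cInf_lower[OF _ bdd] z_def S_def by simp
      then show False using w by simp
    qed
    moreover have "w \<in> nbhd A \<epsilon>"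
    proof -
      obtain a where a: "a \<in> S" "a < w + \<epsilon>" using cInf_lessD[of S] yS w z_def by force
      have "z \<le> a" using cInf_lower[OF a(1) bdd] z_def by simp
      then show ?thesis using a w S_def unfolding nbhd_def by force
    qed
    ultimately show "w \<in> {x..y} \<inter> (nbhd A \<epsilon> - A)" by auto
  qed
qed

lemma nbhd_gap:
  fixes A :: "real set"
  assumes x: "x \<notin> nbhd A \<epsilon>" and y: "y \<in> A"
  shows "\<exists>c. {c<..<c + \<epsilon>} \<subseteq> {min x y..max x y} \<inter> (nbhd A \<epsilon> - A)"
proof (cases "x \<le> y")
  case True
  then show ?thesis using nbhd_gap_right[OF x y] by auto
next
  case False
  have "- x \<notin> nbhd (uminus ` A) \<epsilon>" "- y \<in> uminus ` A"
    using x y uminus_mem_nbhd_uminus by auto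
  then obtain c where c: "{c<..<c + \<epsilon>} \<subseteq> {- x..- y} \<inter> (nbhd (uminus ` A) \<epsilon> - uminus ` A)"
    using nbhd_gap_right[of "- x" "uminus ` A" \<epsilon> "- y"] False by auto
  have "{- c - \<epsilon><..<- c - \<epsilon> + \<epsilon>} \<subseteq> {min x y..max x y} \<inter> (nbhd A \<epsilon> - A)"
  proof
    fix w assume "w \<in> {- c - \<epsilon><..<- c - \<epsilon> + \<epsilon>}"
    then have "- w \<in> {c<..<c + \<epsilon>}" by auto
    then show "w \<in> {min x y..max x y} \<inter> (nbhd A \<epsilon> - A)"
      using c False uminus_mem_nbhd_uminus[of w A \<epsilon>] by (auto simp: image_iff)
  qed
  then show ?thesis by blast
qed

lemma measure_density_interval_ge:
  fixes f :: "real \<Rightarrow> real"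
  assumes \<sigma>: "\<sigma> = density lborel (\<lambda>x. ennreal (f x))" "finite_measure \<sigma>"
    and [measurable]: "f \<in> borel_measurable borel"
    and m: "0 \<le> m" "\<And>y. y \<in> {c<..<c + e} \<Longrightarrow> m \<le> f y" and e: "0 < e"
  shows "m * e \<le> measure \<sigma> {c<..<c + e}"
proof -
  interpret finite_measure \<sigma> by (rule \<sigma>(2))
  have "ennreal (m * e) = (\<integral>\<^sup>+x. ennreal m * indicator {c<..<c + e} x \<partial>lborel)"
    using e m by (subst nn_integral_cmult_indicator) (auto simp: ennreal_mult)
  also have "\<dots> \<le> (\<integral>\<^sup>+x. ennreal (f x) * indicator {c<..<c + e} x \<partial>lborel)"
    by (intro nn_integral_mono) (auto simp: indicator_def m ennreal_leI)
  also have "\<dots> = emeasure \<sigma> {c<..<c + e}"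
    unfolding \<sigma>(1) by (subst emeasure_density) auto
  finally show ?thesis
    by (simp add: emeasure_eq_measure)
qed

lemma boundary_measure_nonneg:
  assumes "finite_measure \<sigma>" "sets \<sigma> = sets borel"
  shows "0 \<le> boundary_measure \<sigma> A"
proof -
  interpret finite_measure \<sigma> by (rule assms(1))
  have "ereal 0 \<le> ereal ((measure \<sigma> (nbhd A e) - measure \<sigma> A) / e)" if "0 < e" for e
  proof -
    have "measure \<sigma> A \<le> measure \<sigma> (nbhd A e)"
      by (rule finite_measure_mono) (use subset_nbhd[OF that] assms(2) in auto)
    then show ?thesis using that by simp
  qed
  then have "\<forall>\<^sub>F e in at_right 0. ereal 0 \<le> ereal ((measure \<sigma> (nbhd A e) - measure \<sigma> A) / e)"
    unfolding eventually_at_right_field by (intro exI[of _ 1]) auto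
  then show ?thesis unfolding boundary_measure_def zero_ereal_def by (rule Liminf_bounded)
qed

lemma measure_nbhd_increment_ge:
  fixes f :: "real \<Rightarrow> real"
  assumes \<sigma>: "\<sigma> = density lborel (\<lambda>x. ennreal (f x))" "finite_measure \<sigma>"
    and [measurable]: "f \<in> borel_measurable borel" and A: "A \<in> sets borel"
    and m: "0 \<le> m" "\<And>y. y \<in> {a..b} \<Longrightarrow> m \<le> f y" and y: "y \<in> A" "y \<in> {a..b}"
    and e: "0 < e" "m * e \<le> measure \<sigma> {a..b} - measure \<sigma> A"
  shows "m * e \<le> measure \<sigma> (nbhd A e) - measure \<sigma> A"
proof -
  interpret finite_measure \<sigma> by (rule \<sigma>(2))
  have sets_\<sigma> [simp]: "sets \<sigma> = sets borel" unfolding \<sigma>(1) by simp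
  show ?thesis
  proof (cases "{a..b} \<subseteq> nbhd A e")
    case True
    then show ?thesis using finite_measure_mono[OF True] e(2) by simp
  next
    case False
    then obtain x where x: "x \<in> {a..b}" "x \<notin> nbhd A e" by blast
    obtain c where c: "{c<..<c + e} \<subseteq> {min x y..max x y} \<inter> (nbhd A e - A)"
      using nbhd_gap[OF x(2) y(1)] by blast
    have "{c<..<c + e} \<subseteq> {a..b}"
      using c x(1) y(2) by (fastforce simp: subset_iff)
    then have "m * e \<le> measure \<sigma> {c<..<c + e}"
      using m by (intro measure_density_interval_ge[OF \<sigma>] e) auto
    also have "\<dots> \<le> measure \<sigma> (nbhd A e - A)"
      using c A by (intro finite_measure_mono) auto
    also have "\<dots> = measure \<sigma> (nbhd A e) - measure \<sigma> A"
      using A subset_nbhd[OF e(1)] by (intro finite_measure_Diff) auto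
    finally show ?thesis .
  qed
qed

lemma boundary_measure_ge_density_bound:
  fixes f :: "real \<Rightarrow> real"
  assumes \<sigma>: "\<sigma> = density lborel (\<lambda>x. ennreal (f x))" "prob_space \<sigma>"
    and [measurable]: "f \<in> borel_measurable borel" and A: "A \<in> sets borel"
    and m: "0 \<le> m" "\<And>y. y \<in> {a..b} \<Longrightarrow> m \<le> f y"
    and K: "measure \<sigma> A < measure \<sigma> {a..b}" "1 - measure \<sigma> A < measure \<sigma> {a..b}"
  shows "ereal m \<le> boundary_measure \<sigma> A"
proof -
  interpret prob_space \<sigma> by (rule \<sigma>(2))
  have sets_\<sigma> [simp]: "sets \<sigma> = sets borel" and space_\<sigma> [simp]: "space \<sigma> = UNIV"
    unfolding \<sigma>(1) by simp_all
  define d where "d = measure \<sigma> {a..b} - measure \<sigma> A"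
  have d: "0 < d" using K d_def by simp
  have "A \<inter> {a..b} \<noteq> {}"
  proof
    assume "A \<inter> {a..b} = {}"
    then have "measure \<sigma> A \<le> measure \<sigma> (space \<sigma> - {a..b})"
      using A by (intro finite_measure_mono) auto
    also have "\<dots> = 1 - measure \<sigma> {a..b}" by (rule prob_compl) simp
    finally show False using K by simp
  qed
  then obtain y where y: "y \<in> A" "y \<in> {a..b}" by blast
  have "m * e \<le> measure \<sigma> (nbhd A e) - measure \<sigma> A" if e: "0 < e" "e < d / (m + 1)" for e
  proof (rule measure_nbhd_increment_ge[OF \<sigma>(1) finite_measure_axioms _ A m y e(1)])
    show "m * e \<le> measure \<sigma> {a..b} - measure \<sigma> A" using e m by (simp add: d_def field_simps)
  qed simp
  moreover have "0 < d / (m + 1)" using d m by simp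
  ultimately have "\<forall>\<^sub>F e in at_right 0. ereal m \<le> ereal ((measure \<sigma> (nbhd A e) - measure \<sigma> A) / e)"
    unfolding eventually_at_right_field by (force simp: field_simps)
  then show ?thesis unfolding boundary_measure_def by (rule Liminf_bounded)
qed

section \<open>Convex functions with values in the extended reals\<close>

lemma exp_neg_nonneg: "0 \<le> exp_neg v"
  unfolding exp_neg_def by auto

lemma exp_neg_le_1: "0 \<le> v \<Longrightarrow> exp_neg v \<le> 1"
  unfolding exp_neg_def by (cases v) auto

lemma exp_neg_antimono: "u \<noteq> -\<infinity> \<Longrightarrow> u \<le> v \<Longrightarrow> exp_neg v \<le> exp_neg u"
  unfolding exp_neg_def by (cases u; cases v) auto

lemma M_delta_nonneg: "0 \<le> M_delta \<delta>"
  unfolding M_delta_def set_lebesgue_integral_def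
  by (intro integral_nonneg_AE) (simp add: exp_neg_nonneg)

lemma min_finite_if_prob_space_density:
  assumes "prob_space (density lborel (\<lambda>x. ennreal (exp_neg (g x))))" and "\<And>x. g 0 \<le> g x"
  shows "g 0 \<noteq> \<infinity>"
proof
  assume "g 0 = \<infinity>"
  then have "emeasure (density lborel (\<lambda>x. ennreal (exp_neg (g x)))) UNIV = 0"
    using assms(2) by (simp add: emeasure_density exp_neg_def)
  then show False using prob_space.emeasure_space_1[OF assms(1)] by simp
qed

lemma ereal_convexD_finite:
  assumes "ereal_convex g" "g x = ereal a" "g y = ereal b" "0 \<le> t" "t \<le> 1"
  shows "g ((1 - t) * x + t * y) \<le> ereal ((1 - t) * a + t * b)"
  using assms unfolding ereal_convex_def by (metis plus_ereal.simps(1) times_ereal.simps(1))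

lemma ereal_convex_le_max:
  assumes conv: "ereal_convex g" and y: "a \<le> y" "y \<le> b"
  shows "g y \<le> max (g a) (g b)"
proof (cases "g a = \<infinity> \<or> g b = \<infinity> \<or> a = b")
  case True
  then show ?thesis using y by auto
next
  case False
  define t where "t = (y - a) / (b - a)"
  have t: "0 \<le> t" "t \<le> 1" using y False by (auto simp: t_def field_simps)
  have "t * (b - a) = y - a" using False by (simp add: t_def)
  then have "y = (1 - t) * a + t * b" by (simp add: algebra_simps)
  then have "g y \<le> ereal (1 - t) * g a + ereal t * g b"
    using conv t unfolding ereal_convex_def by blast
  also have "\<dots> \<le> ereal (1 - t) * max (g a) (g b) + ereal t * max (g a) (g b)"
    using t by (intro add_mono ereal_mult_left_mono) auto
  also have "\<dots> = max (g a) (g b)"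
  proof -
    have "max (g a) (g b) \<noteq> \<infinity>" using False by (simp add: max_def)
    then show ?thesis using t
      by (cases "max (g a) (g b)"; cases "t = 0"; cases "t = 1") (auto simp: algebra_simps)
  qed
  finally show ?thesis .
qed

lemma exp_neg_convex_ge_min:
  assumes conv: "ereal_convex g" and nm: "\<And>x. g x \<noteq> -\<infinity>" and y: "a \<le> y" "y \<le> b"
  shows "min (exp_neg (g a)) (exp_neg (g b)) \<le> exp_neg (g y)"
proof -
  have "exp_neg (max (g a) (g b)) \<le> exp_neg (g y)"
    by (rule exp_neg_antimono[OF nm ereal_convex_le_max[OF conv y]])
  moreover have "exp_neg (max (g a) (g b)) = min (exp_neg (g a)) (exp_neg (g b))"
    using exp_neg_antimono[OF nm, of a "g b"] exp_neg_antimono[OF nm, of b "g a"]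
    by (auto simp: max_def min_def)
  ultimately show ?thesis by simp
qed

text \<open>Superlevel sets of a quasi-concave function are intervals.\<close>
lemma borel_measurable_exp_neg_convex:
  assumes conv: "ereal_convex g" and nm: "\<And>x. g x \<noteq> -\<infinity>"
  shows "(\<lambda>x. exp_neg (g x)) \<in> borel_measurable borel"
proof (rule borel_measurableI_greater)
  fix c :: real
  have "is_interval {x. c < exp_neg (g x)}"
    unfolding is_interval_1 using exp_neg_convex_ge_min[OF conv nm] by (fastforce simp: min_less_iff_disj)
  then show "{x \<in> space borel. c < exp_neg (g x)} \<in> sets borel"
    using real_interval_borel_measurable by simp
qed

lemma ereal_convex_le_chord_from_0:
  assumes conv: "ereal_convex g" and g0: "g 0 = ereal g0" and x: "0 \<le> x" "x \<le> y"
    and gy: "g y = ereal b"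
  shows "g x \<le> ereal ((1 - x / y) * g0 + (x / y) * b)"
proof (cases "y = 0")
  case True
  then show ?thesis using x g0 by auto
next
  case False
  then have "x = (1 - x / y) * 0 + (x / y) * y" by simp
  moreover have "0 \<le> x / y" "x / y \<le> 1" using x False by auto
  ultimately show ?thesis using ereal_convexD_finite[OF conv g0 gy] by metis
qed

lemma ereal_convex_finite_between:
  assumes conv: "ereal_convex g" and nm: "\<And>x. g x \<noteq> -\<infinity>" and g0: "g 0 = ereal g0"
    and x: "0 \<le> x" "x \<le> y" and gy: "g y \<noteq> \<infinity>"
  shows "g x \<noteq> \<infinity>"
proof -
  obtain b where "g y = ereal b" using gy nm by (cases "g y") auto
  from ereal_convex_le_chord_from_0[OF conv g0 x this] show ?thesis by auto
qed

text \<open>The slope of the chord from 0 to x bounds the growth of g beyond x.\<close>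
lemma exp_neg_convex_le_exponential:
  assumes conv: "ereal_convex g" and nm: "\<And>x. g x \<noteq> -\<infinity>" and g0: "g 0 = ereal g0"
    and x: "0 < x" "x \<le> y" and gx: "g x = ereal gx"
  shows "exp_neg (g y) \<le> exp (- gx) * exp (- ((gx - g0) / x) * (y - x))"
proof (cases "g y")
  case (real gy)
  have "ereal gx \<le> ereal ((1 - x / y) * g0 + (x / y) * gy)"
    using ereal_convex_le_chord_from_0[OF conv g0 _ x(2) real] x gx by simp
  moreover have "(1 - x / y) * g0 + (x / y) * gy = g0 + (x / y) * (gy - g0)"
    by (simp add: algebra_simps diff_divide_distrib)
  ultimately have "gx - g0 \<le> (x / y) * (gy - g0)" by simp
  then have "(y / x) * (gx - g0) \<le> gy - g0"
    using x by (simp add: field_simps)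
  then have "gx + ((gx - g0) / x) * (y - x) \<le> gy"
    using x by (simp add: field_simps)
  then show ?thesis using real by (simp add: exp_neg_def mult_exp_exp)
qed (use nm in \<open>auto simp: exp_neg_def\<close>)

section \<open>Growth profiles\<close>

locale growth_profile =
  fixes \<delta> :: "real \<Rightarrow> ereal"
  assumes delta_nonneg: "\<And>t. 0 \<le> t \<Longrightarrow> 0 \<le> \<delta> t"
    and delta_pos: "\<And>t. 0 < t \<Longrightarrow> 0 < \<delta> t"
    and delta_ratio_mono: "\<And>s t. 0 < s \<Longrightarrow> s \<le> t \<Longrightarrow> \<delta> s / ereal s \<le> \<delta> t / ereal t"
begin

lemma delta_finite_below:
  assumes st: "0 < s" "s \<le> t" and dt: "\<delta> t = ereal dt"
  obtains ds where "\<delta> s = ereal ds" "ds / s \<le> dt / t"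
proof (cases "\<delta> s")
  case (real ds)
  then show ?thesis using that delta_ratio_mono[OF st] st dt by (simp add: ereal_divide)
next
  case PInf
  then show ?thesis using delta_ratio_mono[OF st] st dt by (simp add: ereal_divide)
next
  case MInf
  then show ?thesis using delta_nonneg[of s] st by simp
qed

definition profile_weight :: "real \<Rightarrow> real" where
  "profile_weight t = indicator {0..} t * exp_neg (\<delta> t)"

lemma profile_weight_nonneg: "0 \<le> profile_weight t"
  unfolding profile_weight_def by (simp add: exp_neg_nonneg)

text \<open>
  On t > 0, exp (- \<delta> t) = w t powr t where w t = exp (- \<delta> t / t) is monotone, hence measurable.
\<close>
lemma borel_measurable_profile_weight [measurable]: "profile_weight \<in> borel_measurable borel"
proof -
  define w where "w t = (if t > 0 then exp_neg (\<delta> t / ereal t) else 1)" for t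
  have ratio_nonneg: "0 \<le> \<delta> t / ereal t" if "0 < t" for t
    using delta_nonneg[of t] that by (cases "\<delta> t") (auto simp: ereal_divide)
  have "mono (\<lambda>t. - w t)"
  proof (rule monoI)
    fix s t :: real assume st: "s \<le> t"
    show "- w s \<le> - w t"
    proof (cases "0 < s")
      case True
      have "exp_neg (\<delta> t / ereal t) \<le> exp_neg (\<delta> s / ereal s)"
        using ratio_nonneg[OF True] delta_ratio_mono[OF True st] by (intro exp_neg_antimono) auto
      then show ?thesis using True st unfolding w_def by auto
    next
      case False
      then show ?thesis using ratio_nonneg[of t] exp_neg_le_1 unfolding w_def by auto
    qed
  qed
  then have "(\<lambda>t. - (- w t)) \<in> borel_measurable borel"
    by (intro borel_measurable_uminus borel_measurable_mono)
  then have [measurable]: "w \<in> borel_measurable borel" by simp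
  have "profile_weight t = (if t = 0 then exp_neg (\<delta> 0) else if t > 0 then w t powr t else 0)" for t
  proof (cases "0 < t")
    case True
    then show ?thesis
      using delta_nonneg[of t]
      by (cases "\<delta> t") (auto simp: profile_weight_def w_def exp_neg_def ereal_divide powr_def)
  qed (auto simp: profile_weight_def)
  then have "profile_weight = (\<lambda>t. if t = 0 then exp_neg (\<delta> 0) else if t > 0 then w t powr t else 0)"
    by blast
  then show ?thesis by simp
qed

text \<open>Beyond t = 1, the monotone ratio gives \<delta> t \<ge> t \<delta> 1, so the weight has an exponential tail.\<close>
lemma profile_weight_nn_integral_finite: "(\<integral>\<^sup>+t. ennreal (profile_weight t) \<partial>lborel) < top"
proof -
  define c where "c = (if \<delta> 1 = \<infinity> then 1 else real_of_ereal (\<delta> 1))"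
  have c: "0 < c" using delta_pos[of 1] unfolding c_def by (cases "\<delta> 1") auto
  have bound: "profile_weight t \<le> indicator {0..1} t + exponential_density c t / c" for t
  proof (cases "t \<le> 1")
    case True
    have "profile_weight t \<le> indicator {0..1} t"
      using True exp_neg_le_1[OF delta_nonneg, of t] by (auto simp: profile_weight_def indicator_def)
    moreover have "0 \<le> exponential_density c t / c" using c by (simp add: exponential_density_nonneg)
    ultimately show ?thesis by linarith
  next
    case False
    have "exp_neg (\<delta> t) \<le> exp (- c * t)"
    proof (cases "\<delta> t")
      case (real dt)
      obtain d1 where "\<delta> 1 = ereal d1" "d1 / 1 \<le> dt / t"
        using delta_finite_below[of 1 t dt] False real by auto
      then show ?thesis using real False by (simp add: c_def exp_neg_def field_simps)
    qed (use delta_nonneg[of t] False in \<open>auto simp: exp_neg_def\<close>)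
    then show ?thesis
      using False c by (simp add: profile_weight_def exponential_density_def mult.commute)
  qed
  have "(\<integral>\<^sup>+t. ennreal (profile_weight t) \<partial>lborel)
      \<le> (\<integral>\<^sup>+t. ennreal (indicator {0..1} t) + ennreal (1 / c) * ennreal (exponential_density c t) \<partial>lborel)"
    using bound c
    by (intro nn_integral_mono)
       (simp add: ennreal_mult[symmetric] exponential_density_nonneg ennreal_plus[symmetric] ennreal_leI del: ennreal_plus)
  also have "\<dots> = 1 + ennreal (1 / c) * (\<integral>\<^sup>+t. ennreal (exponential_density c t) \<partial>lborel)"
    by (subst nn_integral_add) (auto simp: ennreal_indicator nn_integral_cmult)
  also have "\<dots> = 1 + ennreal (1 / c)"
    using nn_integral_erlang_ith_moment[OF c, where k=0 and i=0] by simp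
  also have "\<dots> < top" by simp
  finally show ?thesis .
qed

lemma nn_integral_profile_weight: "(\<integral>\<^sup>+t. ennreal (profile_weight t) \<partial>lborel) = ennreal (M_delta \<delta>)"
proof -
  have "integrable lborel profile_weight"
    by (rule integrableI_nonneg) (auto simp: profile_weight_nonneg profile_weight_nn_integral_finite)
  moreover have "M_delta \<delta> = integral\<^sup>L lborel profile_weight"
    unfolding M_delta_def set_lebesgue_integral_def profile_weight_def by simp
  ultimately show ?thesis by (simp add: nn_integral_eq_integral profile_weight_nonneg)
qed

lemma delta_le_at_scaled_min:
  assumes M: "0 < M" and dM: "\<delta> M = ereal dM" and L: "0 < L"
  shows "\<delta> (min M (M * L / dM)) \<le> ereal L"
proof -
  have dM_pos: "0 < dM" using delta_pos[OF M] dM by simp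
  show ?thesis
  proof (cases "dM \<le> L")
  case True
  have "M \<le> M * L / dM" using True M dM_pos by (simp add: field_simps)
  then show ?thesis using True dM by (simp add: min_def)
next
  case False
  define t where "t = M * L / dM"
  have t: "0 < t" "t \<le> M" using False M L dM_pos by (auto simp: t_def field_simps)
  obtain d where d: "\<delta> t = ereal d" "d / t \<le> dM / M" using delta_finite_below[OF t dM] by blast
  have "d \<le> t * (dM / M)" using d(2) t by (simp add: field_simps)
  also have "t * (dM / M) = L" unfolding t_def using M dM_pos by simp
  finally show ?thesis using d t by (simp add: t_def[symmetric] min_absorb2)
  qed
qed

lemma delta_sublevel_bounded:
  assumes M: "0 < M" and dM: "\<delta> M = ereal dM" and t: "0 \<le> t" "\<delta> t \<le> ereal L"
  shows "t \<le> max M (L * M / dM)"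
proof (cases "t \<le> M")
  case False
  have dM_pos: "0 < dM" using delta_pos[OF M] dM by simp
  obtain dt where dt: "\<delta> t = ereal dt" using t delta_nonneg[OF t(1)] by (cases "\<delta> t") auto
  obtain d where "\<delta> M = ereal d" "d / M \<le> dt / t"
    using delta_finite_below[OF M _ dt] False by auto
  then have "t * dM \<le> dt * M" using dM False M by (simp add: field_simps)
  also have "\<dots> \<le> L * M" using t(2) dt M by (intro mult_right_mono) auto
  finally have "t \<le> L * M / dM" using dM_pos by (simp add: field_simps)
  then show ?thesis by simp
qed simp

lemma delta_inv_finite:
  assumes M: "0 < M" and dM: "\<delta> M = ereal dM" and L: "0 < L"
  obtains ts where "delta_inv \<delta> L = ereal ts" "min M (M * L / dM) \<le> ts"
    "\<And>t. ts < t \<Longrightarrow> ereal L < \<delta> t"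
proof -
  define S where "S = {ereal t | t. 0 \<le> t \<and> \<delta> t \<le> ereal L}"
  define t\<^sub>0 where "t\<^sub>0 = min M (M * L / dM)"
  define B where "B = max M (L * M / dM)"
  have dM_pos: "0 < dM" using delta_pos[OF M] dM by simp
  have t\<^sub>0_nonneg: "0 \<le> t\<^sub>0" using M L dM_pos by (simp add: t\<^sub>0_def)
  then have "ereal t\<^sub>0 \<in> S"
    unfolding S_def t\<^sub>0_def using delta_le_at_scaled_min[OF assms] by blast
  then have lower: "ereal t\<^sub>0 \<le> Sup S" by (rule Sup_upper)
  have "Sup S \<le> ereal B"
  proof (rule Sup_least)
    fix s assume "s \<in> S"
    then obtain t where t: "s = ereal t" "0 \<le> t" "\<delta> t \<le> ereal L" unfolding S_def by blast
    then have "t \<le> B" unfolding B_def using delta_sublevel_bounded[OF M dM] by blast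
    then show "s \<le> ereal B" using t(1) by simp
  qed
  then obtain ts where ts: "Sup S = ereal ts" using lower by (cases "Sup S") auto
  have "ereal L < \<delta> t" if "ts < t" for t
  proof (rule ccontr)
    assume "\<not> ereal L < \<delta> t"
    then have "ereal t \<in> S"
      unfolding S_def using that lower ts t\<^sub>0_nonneg by (auto simp: not_less)
    then show False using Sup_upper[of "ereal t" S] ts that by simp
  qed
  moreover have "t\<^sub>0 \<le> ts" using lower ts by simp
  ultimately show ?thesis using that ts unfolding delta_inv_def S_def t\<^sub>0_def by blast
qed

text \<open>Evaluate the ratio at t = min x (ts / c), which still lies beyond \<delta>^-1 L.\<close>
lemma ratio_ge_beyond_delta_inv:
  assumes ts: "0 < ts" "\<And>t. ts < t \<Longrightarrow> ereal L < \<delta> t" and c: "0 < c" "c < 1" and L: "0 < L"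
    and x: "ts < x" "\<delta> x = ereal dx"
  shows "c * L / ts \<le> dx / x"
proof -
  define t where "t = min x (ts / c)"
  have "ts < ts / c" using ts c by (simp add: field_simps)
  then have t: "ts < t" "t \<le> x" "t * c \<le> ts" using x c by (auto simp: t_def min_def field_simps)
  then have t_pos: "0 < t" using ts by simp
  obtain dt where dt: "\<delta> t = ereal dt" "dt / t \<le> dx / x"
    using delta_finite_below[OF t_pos t(2) x(2)] by blast
  have "c * L / ts \<le> L / t"
    using t ts t_pos L c by (simp add: field_simps)
  also have "\<dots> \<le> dt / t" using ts(2)[OF t(1)] dt t_pos by (simp add: divide_right_mono)
  also have "\<dots> \<le> dx / x" by (rule dt(2))
  finally show ?thesis .
qed

end

section \<open>Log-concave densities\<close>

locale log_concave_density =
  fixes g :: "real \<Rightarrow> ereal" and g0 :: real and \<sigma> :: "real measure"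
  assumes convex: "ereal_convex g" and not_minf: "\<And>x. g x \<noteq> -\<infinity>" and g_0: "g 0 = ereal g0"
    and g_min: "\<And>x. g 0 \<le> g x"
    and sigma_eq: "\<sigma> = density lborel (\<lambda>x. ennreal (exp_neg (g x)))"
    and prob: "prob_space \<sigma>"
begin

sublocale prob_space \<sigma> by (rule prob)

abbreviation f :: "real \<Rightarrow> real" where
  "f x \<equiv> exp_neg (g x)"

lemma borel_measurable_f [measurable]: "f \<in> borel_measurable borel"
  by (rule borel_measurable_exp_neg_convex[OF convex not_minf])

lemma f_le_exp_neg_g0: "f x \<le> exp (- g0)"
  using exp_neg_antimono[OF not_minf g_min, of x] g_0 by (simp add: exp_neg_def)

lemma sets_sigma [simp]: "sets \<sigma> = sets borel" and space_sigma [simp]: "space \<sigma> = UNIV"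
  unfolding sigma_eq by simp_all

lemma emeasure_sigma:
  "S \<in> sets borel \<Longrightarrow> emeasure \<sigma> S = (\<integral>\<^sup>+x. ennreal (f x) * indicator S x \<partial>lborel)"
  unfolding sigma_eq by (subst emeasure_density) auto

lemma nn_integral_f: "(\<integral>\<^sup>+x. ennreal (f x) \<partial>lborel) = 1"
  using emeasure_sigma[of UNIV] emeasure_space_1 by simp

lemma tail_le_exponential:
  assumes x: "0 < x" and gx: "g x = ereal gx" and D: "g0 < gx"
  shows "measure \<sigma> {x<..} \<le> exp (- gx) * x / (gx - g0)"
proof -
  define l where "l = (gx - g0) / x"
  have l: "0 < l" using x D by (simp add: l_def)
  have "emeasure \<sigma> {x<..} = (\<integral>\<^sup>+y. ennreal (f y) * indicator {x<..} y \<partial>lborel)"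
    by (simp add: emeasure_sigma)
  also have "\<dots> \<le> (\<integral>\<^sup>+y. ennreal (exp (- gx) / l) * ennreal (exponential_density l (y - x)) \<partial>lborel)"
  proof (intro nn_integral_mono)
    fix y
    show "ennreal (f y) * indicator {x<..} y
        \<le> ennreal (exp (- gx) / l) * ennreal (exponential_density l (y - x))"
    proof (cases "x < y")
      case True
      have "f y \<le> exp (- gx) * exp (- l * (y - x))"
        using exp_neg_convex_le_exponential[OF convex not_minf g_0 x _ gx, of y] True l_def by simp
      also have "\<dots> = (exp (- gx) / l) * exponential_density l (y - x)"
        using True l by (simp add: exponential_density_def algebra_simps)
      finally show ?thesis using True l by (simp add: ennreal_mult[symmetric] ennreal_leI)
    qed auto
  qed
  also have "\<dots> = ennreal (exp (- gx) / l) * (\<integral>\<^sup>+y. ennreal (exponential_density l (y - x)) \<partial>lborel)"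
    by (rule nn_integral_cmult) measurable
  also have "(\<integral>\<^sup>+y. ennreal (exponential_density l (y - x)) \<partial>lborel) = 1"
    using nn_integral_real_affine[of "\<lambda>z. ennreal (exponential_density l z)" 1 "- x"]
      nn_integral_erlang_ith_moment[OF l, where k=0 and i=0] by simp
  finally show ?thesis using x D l by (simp add: emeasure_eq_measure l_def)
qed

lemma tail_eq_0:
  assumes x: "0 \<le> x" and gx: "g x = \<infinity>"
  shows "measure \<sigma> {x<..} = 0"
proof -
  have "g y = \<infinity>" if "x < y" for y
    using ereal_convex_finite_between[OF convex not_minf g_0 x, of y] gx that by auto
  then have zero: "ennreal (f y) * indicator {x<..} y = 0" for y
    by (cases "x < y") (auto simp: exp_neg_def)
  have "emeasure \<sigma> {x<..} = (\<integral>\<^sup>+y. ennreal (f y) * indicator {x<..} y \<partial>lborel)"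
    by (simp add: emeasure_sigma)
  also have "\<dots> = 0" by (simp only: zero) simp
  finally show ?thesis by (simp add: measure_def)
qed

lemma tail_diff_le:
  assumes "x \<le> y"
  shows "measure \<sigma> {x<..} - measure \<sigma> {y<..} \<le> exp (- g0) * (y - x)"
proof -
  have "measure \<sigma> {x<..} = measure \<sigma> ({x<..y} \<union> {y<..})"
    using assms by (intro arg_cong[where f="measure \<sigma>"]) auto
  also have "\<dots> = measure \<sigma> {x<..y} + measure \<sigma> {y<..}"
    by (rule finite_measure_Union) auto
  finally have eq: "measure \<sigma> {x<..} - measure \<sigma> {y<..} = measure \<sigma> {x<..y}" by simp
  have "emeasure \<sigma> {x<..y} = (\<integral>\<^sup>+z. ennreal (f z) * indicator {x<..y} z \<partial>lborel)"
    by (simp add: emeasure_sigma)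
  also have "\<dots> \<le> (\<integral>\<^sup>+z. ennreal (exp (- g0)) * indicator {x<..y} z \<partial>lborel)"
    by (intro nn_integral_mono) (auto simp: indicator_def f_le_exp_neg_g0 ennreal_leI)
  also have "\<dots> = ennreal (exp (- g0) * (y - x))"
    using assms by (subst nn_integral_cmult_indicator) (auto simp: ennreal_mult)
  finally show ?thesis
    using eq assms by (simp add: emeasure_eq_measure ennreal_le_iff)
qed

lemma continuous_on_tail: "continuous_on S (\<lambda>x. measure \<sigma> {x<..})"
proof (rule lipschitz_on_continuous_on[of "exp (- g0)"], rule lipschitz_onI)
  have mono: "measure \<sigma> {b<..} \<le> measure \<sigma> {a<..}" if "a \<le> b" for a b
    using that by (intro finite_measure_mono) auto
  fix x y
  show "dist (measure \<sigma> {x<..}) (measure \<sigma> {y<..}) \<le> exp (- g0) * dist x y"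
    using tail_diff_le[of x y] tail_diff_le[of y x] mono[of x y] mono[of y x]
    by (cases "x \<le> y") (auto simp: dist_real_def)
qed simp

lemma exists_tail_le: "0 < q \<Longrightarrow> \<exists>b\<ge>0. measure \<sigma> {b<..} \<le> q"
proof -
  assume q: "0 < q"
  have "(\<lambda>n. measure \<sigma> {real n<..}) \<longlonglongrightarrow> measure \<sigma> (\<Inter>n. {real n<..})"
    by (rule finite_Lim_measure_decseq) (auto simp: decseq_def)
  moreover have "x \<notin> (\<Inter>n. {real n<..})" for x :: real
    using reals_Archimedean2[of x] by (blast intro: less_asym)
  then have "(\<Inter>n. {real n<..}) = {}" by blast
  ultimately have "(\<lambda>n. measure \<sigma> {real n<..}) \<longlonglongrightarrow> 0" by simp
  then have "\<forall>\<^sub>F n in sequentially. measure \<sigma> {real n<..} < q"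
    using q by (rule order_tendstoD(2))
  then obtain n where "measure \<sigma> {real n<..} < q" by (auto simp: eventually_sequentially)
  then show ?thesis by (intro exI[of _ "real n"]) auto
qed

lemma log_concave_density_reflected:
  "log_concave_density (\<lambda>x. g (- x)) g0 (density lborel (\<lambda>x. ennreal (exp_neg (g (- x)))))"
proof (rule log_concave_density.intro)
  show "ereal_convex (\<lambda>x. g (- x))"
    unfolding ereal_convex_def
  proof (intro allI impI)
    fix x y t :: real assume t: "0 \<le> t \<and> t \<le> 1"
    have "- ((1 - t) * x + t * y) = (1 - t) * (- x) + t * (- y)" by (simp add: algebra_simps)
    then show "g (- ((1 - t) * x + t * y)) \<le> ereal (1 - t) * g (- x) + ereal t * g (- y)"
      using convex t unfolding ereal_convex_def by metis
  qed
  have "(\<integral>\<^sup>+x. ennreal (f (- x)) \<partial>lborel) = 1"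
    using nn_integral_real_affine[of "\<lambda>x. ennreal (f x)" "- 1" 0] nn_integral_f by simp
  then show "prob_space (density lborel (\<lambda>x. ennreal (exp_neg (g (- x)))))"
    by (intro prob_spaceI) (simp add: emeasure_density)
qed (use not_minf g_0 g_min in auto)

lemma measure_reflected_tail:
  "measure (density lborel (\<lambda>x. ennreal (exp_neg (g (- x))))) {a<..} = measure \<sigma> {..< - a}"
proof -
  have "emeasure (density lborel (\<lambda>x. ennreal (f (- x)))) {a<..}
      = (\<integral>\<^sup>+x. (\<lambda>y. ennreal (f y) * indicator {..< - a} y) (- x) \<partial>lborel)"
    by (simp add: emeasure_density indicator_def)
  also have "\<dots> = (\<integral>\<^sup>+x. ennreal (f x) * indicator {..< - a} x \<partial>lborel)"
    using nn_integral_real_affine[of "\<lambda>y. ennreal (f y) * indicator {..< - a} y" "- 1" 0] by simp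
  also have "\<dots> = emeasure \<sigma> {..< - a}" by (simp add: emeasure_sigma)
  finally show ?thesis by (simp add: measure_def)
qed

text \<open>The density is quasi-concave, so a lower bound at both endpoints holds on the whole interval.\<close>
lemma boundary_measure_ge_endpoints:
  assumes A: "A \<in> sets borel" and a_le_b: "a \<le> b"
    and tails: "measure \<sigma> {..< a} \<le> q" "measure \<sigma> {b<..} \<le> q"
    and q: "2 * q < min (measure \<sigma> A) (1 - measure \<sigma> A)"
    and m: "0 \<le> m" "m \<le> f a" "m \<le> f b"
  shows "ereal m \<le> boundary_measure \<sigma> A"
proof (rule boundary_measure_ge_density_bound[OF sigma_eq prob borel_measurable_f A m(1)])
  show "m \<le> f y" if "y \<in> {a..b}" for y
    using exp_neg_convex_ge_min[OF convex not_minf, of a y b] that m by auto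
  have "space \<sigma> = {..< a} \<union> ({a..b} \<union> {b<..})" using a_le_b by auto
  then have "1 = measure \<sigma> ({..< a} \<union> ({a..b} \<union> {b<..}))" using prob_space by simp
  also have "\<dots> = measure \<sigma> {..< a} + (measure \<sigma> {a..b} + measure \<sigma> {b<..})"
    using a_le_b by (subst finite_measure_Union; (subst finite_measure_Union)?) auto
  finally show "measure \<sigma> A < measure \<sigma> {a..b}" "1 - measure \<sigma> A < measure \<sigma> {a..b}"
    using tails q by auto
qed

end

section \<open>The isoperimetric inequality\<close>

lemma mult_exp_neg_div_e_le_1:
  fixes L :: real
  assumes "0 \<le> L"
  shows "L * exp (- L / exp 1) \<le> 1"
proof -
  have "1 + (L / exp 1 - 1) \<le> exp (L / exp 1 - 1)" by (rule exp_ge_add_one_self)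
  then have "L / exp 1 \<le> exp (L / exp 1) / exp 1" by (simp add: exp_diff)
  then have "L \<le> exp (L / exp 1)" by (simp add: divide_right_mono_neg field_simps)
  then have "L * exp (- L / exp 1) \<le> exp (L / exp 1) * exp (- L / exp 1)"
    by (intro mult_right_mono) auto
  also have "\<dots> = 1" by (simp add: mult_exp_exp)
  finally show ?thesis .
qed

lemma isoperimetric_constant_bounds:
  fixes c dM :: real
  assumes c: "c = (exp 1 - 1) / (exp 1 * max dM 1)"
  shows "0 < c" "c < 1" "c \<le> 1 - 1 / exp 1" "c * dM \<le> 1"
proof -
  show c_pos: "0 < c" using c by (simp add: add_pos_pos)
  have c_max: "c * max dM 1 = 1 - 1 / exp 1" using c by (simp add: field_simps)
  have "c * 1 \<le> c * max dM 1" "c * dM \<le> c * max dM 1" using c_pos by (intro mult_left_mono; simp)+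
  moreover have "0 < 1 / exp (1::real)" by simp
  ultimately show "c < 1" "c \<le> 1 - 1 / exp 1" "c * dM \<le> 1"
    using c_max by linarith+
qed

text \<open>
  Split exp (- L) = exp (-(1 - c) L) exp (- c L). The factor c L exp (-(1 - c) L) is at most
  L exp (- L / e) \<le> 1 if dM \<le> L, and at most L / dM otherwise, because c \<le> 1 - 1/e and c dM \<le> 1.
\<close>
lemma isoperimetric_constant_ineq:
  fixes f0 M dM L ts c :: real
  assumes f0: "0 < f0" and mass: "1 \<le> 2 * f0 * M" and M: "0 < M" and dM: "0 < dM" and L: "0 < L"
    and c: "c = (exp 1 - 1) / (exp 1 * max dM 1)"
    and ts: "0 < ts" "min M (M * L / dM) \<le> ts"
  shows "c / 2 * exp (- L) * L / ts \<le> f0 * exp (- c * L)"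
proof -
  from isoperimetric_constant_bounds[OF c]
  have c_pos: "0 < c" and c_lt_1: "c < 1" and c_le: "c \<le> 1 - 1 / exp 1" and c_dM: "c * dM \<le> 1"
    by simp_all
  define X where "X = exp (- (1 - c) * L)"
  have X: "0 \<le> X" "X \<le> 1" using c_lt_1 L by (auto simp: X_def mult_nonpos_nonneg)
  have main: "c * L * X \<le> 2 * f0 * ts"
  proof (cases "dM \<le> L")
    case True
    have "M \<le> ts" using ts True M dM by (simp add: min_def field_simps split: if_splits)
    have "L * (c + 1 / exp 1) \<le> L * 1" using c_le L by (intro mult_left_mono) auto
    then have "- (1 - c) * L \<le> - L / exp 1" by (simp add: algebra_simps)
    then have "c * L * X \<le> L * exp (- L / exp 1)"
      using c_lt_1 c_pos L X unfolding X_def by (intro mult_mono) auto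
    also have "\<dots> \<le> 1" using L by (intro mult_exp_neg_div_e_le_1) simp
    also have "\<dots> \<le> 2 * f0 * ts" using mass \<open>M \<le> ts\<close> f0 by (smt (verit) mult_left_mono)
    finally show ?thesis .
  next
    case False
    have "M * L / dM \<le> ts" using ts False M dM by (simp add: min_def field_simps split: if_splits)
    have "c * L * X \<le> (c * dM) * (L / dM)" using X c_pos L dM by (simp add: mult_left_le)
    also have "\<dots> \<le> (2 * f0 * M) * (L / dM)"
      using c_dM mass L dM by (intro mult_right_mono) auto
    also have "\<dots> = 2 * f0 * (M * L / dM)" by simp
    also have "\<dots> \<le> 2 * f0 * ts" using \<open>M * L / dM \<le> ts\<close> f0 by (intro mult_left_mono) auto
    finally show ?thesis .
  qed
  have "c / 2 * exp (- L) * L / ts = (c * L * X) * exp (- c * L) / (2 * ts)"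
    by (simp add: X_def mult_exp_exp algebra_simps)
  also have "\<dots> \<le> (2 * f0 * ts) * exp (- c * L) / (2 * ts)"
    using main ts by (intro divide_right_mono mult_right_mono) auto
  also have "\<dots> = f0 * exp (- c * L)" using ts by simp
  finally show ?thesis .
qed

locale growth_bounded_density = log_concave_density + growth_profile +
  assumes growth: "\<And>x. \<delta> \<bar>x\<bar> \<le> g x - g 0"
begin

lemma growth_bounded_density_reflected:
  "growth_bounded_density (\<lambda>x. g (- x)) g0 (density lborel (\<lambda>x. ennreal (exp_neg (g (- x))))) \<delta>"
  using growth[of "- _"]
  by (intro growth_bounded_density.intro log_concave_density_reflected growth_profile_axioms
      growth_bounded_density_axioms.intro) simp

lemma f_le_exp_neg_delta: "f x \<le> exp (- g0) * exp_neg (\<delta> \<bar>x\<bar>)"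
proof (cases "g x")
  case (real r)
  have "0 \<le> \<delta> \<bar>x\<bar>" "\<delta> \<bar>x\<bar> \<le> ereal (r - g0)" using delta_nonneg growth[of x] real g_0 by auto
  then obtain d where "\<delta> \<bar>x\<bar> = ereal d" "d \<le> r - g0" by (cases "\<delta> \<bar>x\<bar>") auto
  then show ?thesis using real by (simp add: exp_neg_def mult_exp_exp)
qed (use not_minf in \<open>auto simp: exp_neg_def exp_neg_nonneg\<close>)

lemma one_le_mass_bound: "1 \<le> 2 * exp (- g0) * M_delta \<delta>"
proof -
  have "exp_neg (\<delta> \<bar>x\<bar>) \<le> profile_weight x + profile_weight (- x)" for x
    using profile_weight_nonneg[of x] profile_weight_nonneg[of "- x"]
    by (cases "0 \<le> x") (auto simp: profile_weight_def)
  then have "ennreal (f x) \<le> ennreal (exp (- g0)) * (ennreal (profile_weight x) + ennreal (profile_weight (- x)))"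
    for x
    using f_le_exp_neg_delta[of x] profile_weight_nonneg
    by (simp add: ennreal_mult[symmetric] ennreal_plus[symmetric] ennreal_leI order_trans del: ennreal_plus)
  then have "1 \<le> (\<integral>\<^sup>+x. ennreal (exp (- g0)) * (ennreal (profile_weight x) + ennreal (profile_weight (- x))) \<partial>lborel)"
    unfolding nn_integral_f[symmetric] by (rule nn_integral_mono)
  also have "\<dots> = ennreal (exp (- g0)) * (ennreal (M_delta \<delta>) + ennreal (M_delta \<delta>))"
    using nn_integral_real_affine[of "\<lambda>x. ennreal (profile_weight x)" "- 1" 0]
    by (simp add: nn_integral_cmult nn_integral_add nn_integral_profile_weight)
  also have "ennreal (exp (- g0)) * (ennreal (M_delta \<delta>) + ennreal (M_delta \<delta>))
      = ennreal (2 * exp (- g0) * M_delta \<delta>)"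
    using M_delta_nonneg by (simp add: ennreal_mult[symmetric] ennreal_plus[symmetric] del: ennreal_plus)
  finally show ?thesis by simp
qed

text \<open>
  Either g has risen by less than c L at x, so the density is large outright, or the exponential
  tail bound q \<le> exp (- g x) x / (g x - g 0) turns the growth of g into a lower bound.
\<close>
lemma density_ge_at_tail_quantile:
  assumes ts: "0 < ts" "\<And>t. ts < t \<Longrightarrow> ereal L < \<delta> t" and c: "0 < c" "c < 1" and L: "0 < L"
    and q: "0 < q" "q * c * L / ts \<le> exp (- g0) * exp (- c * L)"
    and x: "0 < x" "measure \<sigma> {x<..} = q"
  shows "q * c * L / ts \<le> f x"
proof -
  have "g x \<noteq> \<infinity>" using tail_eq_0[of x] x q by auto
  then obtain gx where gx: "g x = ereal gx" using not_minf by (cases "g x") auto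
  have "0 < \<delta> x" "\<delta> x \<le> ereal (gx - g0)" using delta_pos growth[of x] x gx g_0 by auto
  then obtain dx where dx: "\<delta> x = ereal dx" "0 < dx" "dx \<le> gx - g0" by (cases "\<delta> x") auto
  have "q \<le> exp (- gx) * x / (gx - g0)" using tail_le_exponential[OF x(1) gx] dx x(2) by simp
  then have hazard: "q * ((gx - g0) / x) \<le> exp (- gx)" using x dx by (simp add: field_simps)
  have "q * c * L / ts \<le> exp (- gx)"
  proof (cases "gx - g0 < c * L")
    case True
    then have "exp (- g0) * exp (- c * L) \<le> exp (- gx)" by (simp add: mult_exp_exp)
    then show ?thesis using q by linarith
  next
    case False
    have "c * L / ts \<le> (gx - g0) / x"
    proof (cases "x \<le> ts")
      case True
      have "c * L / ts \<le> (gx - g0) / ts" using False ts by (simp add: divide_right_mono)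
      also have "\<dots> \<le> (gx - g0) / x" using True x dx by (intro divide_left_mono) auto
      finally show ?thesis .
    next
      case False
      then have "ts < x" by simp
      then have "c * L / ts \<le> dx / x" using ratio_ge_beyond_delta_inv[OF ts c L _ dx(1)] by blast
      also have "\<dots> \<le> (gx - g0) / x" using dx x by (simp add: divide_right_mono)
      finally show ?thesis .
    qed
    then have "q * (c * L / ts) \<le> q * ((gx - g0) / x)" using q by (intro mult_left_mono) auto
    then show ?thesis using hazard by simp
  qed
  then show ?thesis using gx by (simp add: exp_neg_def)
qed

lemma right_endpoint_exists:
  assumes ts: "0 < ts" "\<And>t. ts < t \<Longrightarrow> ereal L < \<delta> t" and c: "0 < c" "c < 1" and L: "0 < L"
    and q: "0 < q" "q * c * L / ts \<le> exp (- g0) * exp (- c * L)"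
  shows "\<exists>a\<ge>0. measure \<sigma> {a<..} \<le> q \<and> q * c * L / ts \<le> f a"
proof (cases "measure \<sigma> {0<..} \<le> q")
  case True
  have "exp (- g0) * exp (- c * L) \<le> exp (- g0)" using c L by simp
  then have "q * c * L / ts \<le> exp (- g0)" using q(2) by linarith
  then show ?thesis using True g_0 by (intro exI[of _ 0]) (auto simp: exp_neg_def)
next
  case False
  obtain b where b: "0 \<le> b" "measure \<sigma> {b<..} \<le> q" using exists_tail_le[OF q(1)] by blast
  obtain x where x: "0 \<le> x" "x \<le> b" "measure \<sigma> {x<..} = q"
    using IVT2'[of "\<lambda>x. measure \<sigma> {x<..}" b q 0] b False continuous_on_tail by auto
  have x_pos: "0 < x" using x False by (cases "x = 0") auto
  show ?thesis using density_ge_at_tail_quantile[OF assms x_pos x(3)] x by auto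
qed

lemma boundary_measure_ge_level:
  assumes A: "A \<in> sets borel"
    and ts: "0 < ts" "\<And>t. ts < t \<Longrightarrow> ereal L < \<delta> t" and c: "0 < c" "c < 1" and L: "0 < L"
    and p: "p = min (measure \<sigma> A) (1 - measure \<sigma> A)" "0 < p"
    and level: "c / 2 * p * L / ts \<le> exp (- g0) * exp (- c * L)"
  shows "ereal (c / 2 * p * L / ts) \<le> boundary_measure \<sigma> A"
proof -
  interpret reflected: growth_bounded_density "\<lambda>x. g (- x)" g0
      "density lborel (\<lambda>x. ennreal (exp_neg (g (- x))))" \<delta>
    by (rule growth_bounded_density_reflected)
  show ?thesis
  proof (rule ereal_le_mult_one_interval)
    show "boundary_measure \<sigma> A \<noteq> - \<infinity>"
      using boundary_measure_nonneg[of \<sigma> A] finite_measure_axioms by auto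
    fix z :: ereal assume "0 < z" "z < 1"
    then obtain r where r: "z = ereal r" "0 < r" "r < 1" by (cases z) auto
    define q where "q = r * p / 2"
    have q: "0 < q" "2 * q < p" using r p(2) by (simp_all add: q_def)
    have "q * c * L / ts = r * (c / 2 * p * L / ts)" by (simp add: q_def)
    also have "\<dots> \<le> c / 2 * p * L / ts"
      using r c L ts p(2) by (intro mult_left_le_one_le) auto
    finally have q_level: "q * c * L / ts \<le> exp (- g0) * exp (- c * L)" using level by simp
    obtain b where b: "0 \<le> b" "measure \<sigma> {b<..} \<le> q" "q * c * L / ts \<le> f b"
      using right_endpoint_exists[OF ts c L q(1) q_level] by blast
    obtain a where a: "0 \<le> a" "measure \<sigma> {..< - a} \<le> q" "q * c * L / ts \<le> f (- a)"
      using reflected.right_endpoint_exists[OF ts c L q(1) q_level] measure_reflected_tail by auto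
    have "ereal (q * c * L / ts) \<le> boundary_measure \<sigma> A"
      using a b ts c L q p by (intro boundary_measure_ge_endpoints[OF A, of "- a" b q]) auto
    then show "z * ereal (c / 2 * p * L / ts) \<le> boundary_measure \<sigma> A"
      using r by (simp add: q_def ac_simps)
  qed
qed

lemma isoperimetric_nondegenerate:
  assumes A: "A \<in> sets borel" and p: "0 < min (measure \<sigma> A) (1 - measure \<sigma> A)"
    and dM: "\<delta> (M_delta \<delta>) = ereal dM"
  shows "C_delta \<delta> * ereal (min (measure \<sigma> A) (1 - measure \<sigma> A))
      * gamma_fun \<delta> (ln (1 / min (measure \<sigma> A) (1 - measure \<sigma> A))) \<le> boundary_measure \<sigma> A"
proof -
  define p where "p = min (measure \<sigma> A) (1 - measure \<sigma> A)"
  define M where "M = M_delta \<delta>"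
  define L where "L = ln (1 / p)"
  define c where "c = (exp 1 - 1) / (exp 1 * max dM 1)"
  have mass: "1 \<le> 2 * exp (- g0) * M" unfolding M_def by (rule one_le_mass_bound)
  then have M: "0 < M" by (smt (verit) exp_gt_zero mult_nonneg_nonpos)
  have dM_pos: "0 < dM" using delta_pos[OF M] dM by (simp add: M_def)
  have p_pos: "0 < p" using p by (simp add: p_def)
  have "p \<le> 1 / 2" by (auto simp: p_def min_def)
  then have "1 < 1 / p" using p_pos by (simp add: field_simps)
  then have L: "0 < L" unfolding L_def by (rule ln_gt_zero)
  have p_eq: "p = exp (- L)" using p_pos by (simp add: L_def ln_div)
  obtain ts where ts: "delta_inv \<delta> L = ereal ts" "min M (M * L / dM) \<le> ts"
      "\<And>t. ts < t \<Longrightarrow> ereal L < \<delta> t"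
    using delta_inv_finite[OF M dM[folded M_def] L] by blast
  have "0 < min M (M * L / dM)" using M L dM_pos by simp
  then have ts_pos: "0 < ts" using ts(2) by linarith
  have c_pos: "0 < c" and c_lt_1: "c < 1"
    using isoperimetric_constant_bounds[OF c_def] by simp_all
  have "C_delta \<delta> = ereal (c / 2)"
    using dM by (simp add: C_delta_def c_def ereal_divide max_def field_simps)
  moreover have "gamma_fun \<delta> L = ereal (L / ts)"
    using ts ts_pos by (simp add: gamma_fun_def ereal_divide)
  ultimately have lhs: "C_delta \<delta> * ereal p * gamma_fun \<delta> L = ereal (c / 2 * p * L / ts)" by simp
  have level: "c / 2 * p * L / ts \<le> exp (- g0) * exp (- c * L)"
    unfolding p_eq using mass M dM_pos L ts(2) ts_pos
    by (intro isoperimetric_constant_ineq[OF _ _ _ _ _ c_def]) auto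
  have "ereal (c / 2 * p * L / ts) \<le> boundary_measure \<sigma> A"
    by (rule boundary_measure_ge_level[OF A ts_pos ts(3) c_pos c_lt_1 L p_def p_pos level])
  then show ?thesis unfolding p_def[symmetric] L_def[symmetric] lhs .
qed

end

theorem mainTheorem13:
  fixes \<delta> :: "real \<Rightarrow> ereal" and g :: "real \<Rightarrow> ereal" and \<sigma> :: "real measure"
    and A :: "real set"
  assumes delta_nonneg: "\<And>t. t \<ge> 0 \<Longrightarrow> \<delta> t \<ge> 0"
    and delta_pos: "\<And>t. t > 0 \<Longrightarrow> \<delta> t > 0"
    and delta_ratio_mono: "\<And>s t. 0 < s \<Longrightarrow> s \<le> t \<Longrightarrow> \<delta> s / ereal s \<le> \<delta> t / ereal t"
    and g_not_minf: "\<And>x. g x \<noteq> -\<infinity>"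
    and g_convex: "ereal_convex g"
    and g_min: "\<And>x. g 0 \<le> g x"
    and g_growth: "\<And>x. g x - g 0 \<ge> \<delta> \<bar>x\<bar>"
    and sigma_def: "\<sigma> = density lborel (\<lambda>x. ennreal (exp_neg (g x)))"
    and sigma_prob: "prob_space \<sigma>"
    and A_borel: "A \<in> sets borel"
  shows "boundary_measure \<sigma> A \<ge>
    C_delta \<delta> * ereal (min (measure \<sigma> A) (1 - measure \<sigma> A))
      * gamma_fun \<delta> (ln (1 / min (measure \<sigma> A) (1 - measure \<sigma> A)))"
proof -
  have "g 0 \<noteq> \<infinity>"
    using min_finite_if_prob_space_density[of g] sigma_prob g_min by (simp add: sigma_def)
  then obtain g0 where "g 0 = ereal g0" using g_not_minf by (cases "g 0") auto
  then interpret growth_bounded_density g g0 \<sigma> \<delta>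
    using g_convex g_not_minf g_min sigma_def sigma_prob delta_nonneg delta_pos delta_ratio_mono g_growth
    by (intro growth_bounded_density.intro log_concave_density.intro growth_profile.intro
        growth_bounded_density_axioms.intro) auto
  define p where "p = min (measure \<sigma> A) (1 - measure \<sigma> A)"
  have "0 \<le> p" unfolding p_def using measure_nonneg[of \<sigma> A] prob_le_1[of A] by linarith
  then consider "p = 0 \<or> \<delta> (M_delta \<delta>) = \<infinity>" | dM where "0 < p" "\<delta> (M_delta \<delta>) = ereal dM"
    using delta_nonneg[OF M_delta_nonneg] by (cases "\<delta> (M_delta \<delta>)") force+
  then show ?thesis
  proof cases
    case 1
    then have zero: "C_delta \<delta> * ereal p = 0" by (elim disjE) (simp, simp add: C_delta_def)
    have "C_delta \<delta> * ereal p * gamma_fun \<delta> (ln (1 / p)) \<le> boundary_measure \<sigma> A"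
      unfolding zero using boundary_measure_nonneg[OF finite_measure_axioms] by simp
    then show ?thesis unfolding p_def .
  next
    case 2
    then show ?thesis using isoperimetric_nondegenerate[OF A_borel] by (simp add: p_def)
  qed
qed

end
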